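(* Let $\mathcal{M}=((X,\mathcal{C}_X),\mathcal{V})$ be a closure model with associated closure coalgebra $(X,\eta)$, let $(Y,\theta)$ be a $\mathbf{C}$-coalgebra and $f:(X,\eta)\to(Y,\theta)$ a surjective coalgebra homomorphism. Define $\mathcal{C}_Y(B)=\{y\in Y\mid B\in(\theta y)_2\}$ for $B\subseteq Y$. Then $(Y,\mathcal{C}_Y)$ is a closure space.
   Context: A closure space is $(X,\mathcal{C})$ with $X$ non-empty and $\mathcal{C}:\mathcal{P}(X)\to\mathcal{P}(X)$ satisfying $\mathcal{C}(\emptyset)=\emptyset$, $A\subseteq\mathcal{C}(A)$, $\mathcal{C}(A_1\cup A_2)=\mathcal{C}(A_1)\cup\mathcal{C}(A_2)$. Closure model: closure space plus $\mathcal{V}:AP\to\mathcal{P}(X)$, $\mathcal{V}^{-1}(x)=\{p\mid x\in\mathcal{V}(p)\}$. Closure functor $\mathbf{C}X=\mathcal{P}(AP)\times\mathcal{P}(\mathcal{P}(X))$, $\mathbf{C}f(v,S)=(v,\{f[A]\mid A\in S\})$ (covariant powerset). The closure coalgebra of the model is $\eta(x)=(\mathcal{V}^{-1}(x),\{A\subseteq X\mid x\in\mathcal{C}_X(A)\})$. A homomorphism $f:(X,\eta)\to(Y,\theta)$ satisfies $\theta\circ f=(\mathbf{C}f)\circ\eta$. *)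

theory Defs
  imports Main
begin

text \<open>Carriers are modelled as (automatically non-empty) types: X = UNIV :: 'x set.\<close>

definition closure_space :: "('x set \<Rightarrow> 'x set) \<Rightarrow> bool" where
  "closure_space C \<longleftrightarrow> C {} = {} \<and> (\<forall>A. A \<subseteq> C A) \<and> (\<forall>A1 A2. C (A1 \<union> A2) = C A1 \<union> C A2)"

text \<open>Closure functor: C X = P(AP) x P(P(X)).\<close>
type_synonym ('p, 'x) cfun = "'p set \<times> 'x set set"

definition Cmap :: "('x \<Rightarrow> 'y) \<Rightarrow> ('p, 'x) cfun \<Rightarrow> ('p, 'y) cfun" where
  "Cmap f vs = (fst vs, (\<lambda>A. f ` A) ` snd vs)"

definition Vinv :: "('p \<Rightarrow> 'x set) \<Rightarrow> 'x \<Rightarrow> 'p set" where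
  "Vinv V x = {p. x \<in> V p}"

definition closure_coalg :: "('x set \<Rightarrow> 'x set) \<Rightarrow> ('p \<Rightarrow> 'x set) \<Rightarrow> 'x \<Rightarrow> ('p, 'x) cfun" where
  "closure_coalg C V x = (Vinv V x, {A. x \<in> C A})"

definition coalg_hom :: "('x \<Rightarrow> ('p, 'x) cfun) \<Rightarrow> ('y \<Rightarrow> ('p, 'y) cfun) \<Rightarrow> ('x \<Rightarrow> 'y) \<Rightarrow> bool" where
  "coalg_hom \<eta> \<theta> f \<longleftrightarrow> (\<forall>x. \<theta> (f x) = Cmap f (\<eta> x))"

end

theory Submission
  imports Defs
begin

(* A homomorphism from the closure coalgebra of CX onto \<theta> forces
  B \<in> snd (\<theta> (f x)) exactly when x \<in> CX (f -` B): every witness A with f ` A = B lies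
  inside f -` B, and closure is monotone. Hence the induced operator is
  B \<mapsto> f ` CX (f -` B), and the closure axioms transfer along preimage and image,
  which both preserve the empty set and binary unions. *)

lemma closure_space_mono:
  assumes "closure_space C" and "A \<subseteq> B"
  shows "C A \<subseteq> C B"
proof -
  have "C B = C A \<union> C (B - A)"
    using assms unfolding closure_space_def by (metis Diff_partition)
  then show ?thesis by blast
qed

lemma closure_space_image:
  assumes "closure_space C" and "surj f"
  shows "closure_space (\<lambda>B. f ` C (f -` B))"
  using assms unfolding closure_space_def
  by (auto simp: vimage_Un image_Un) (metis image_mono surj_image_vimage_eq subset_iff)

lemma closure_coalg_hom_snd:
  assumes "closure_space C" and "coalg_hom (closure_coalg C V) \<theta> f" and "surj f"
  shows "B \<in> snd (\<theta> (f x)) \<longleftrightarrow> x \<in> C (f -` B)"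
proof -
  have "B \<in> snd (\<theta> (f x)) \<longleftrightarrow> (\<exists>A. B = f ` A \<and> x \<in> C A)"
    using assms(2) unfolding coalg_hom_def Cmap_def closure_coalg_def by auto
  also have "\<dots> \<longleftrightarrow> x \<in> C (f -` B)"
  proof
    assume "\<exists>A. B = f ` A \<and> x \<in> C A"
    then obtain A where "B = f ` A" and "x \<in> C A" by blast
    then show "x \<in> C (f -` B)"
      using closure_space_mono[OF assms(1), of A "f -` B"] by blast
  next
    assume "x \<in> C (f -` B)"
    then show "\<exists>A. B = f ` A \<and> x \<in> C A"
      using surj_image_vimage_eq[OF assms(3)] by metis
  qed
  finally show ?thesis .
qed

theorem lemma9:
  fixes CX :: "'x set \<Rightarrow> 'x set" and V :: "'p \<Rightarrow> 'x set"
    and \<theta> :: "'y \<Rightarrow> ('p, 'y) cfun" and f :: "'x \<Rightarrow> 'y"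
  assumes "closure_space CX"
    and "coalg_hom (closure_coalg CX V) \<theta> f"
    and "surj f"
  shows "closure_space (\<lambda>B. {y. B \<in> snd (\<theta> y)})"
proof -
  have "{y. B \<in> snd (\<theta> y)} = f ` CX (f -` B)" for B
  proof (intro set_eqI iffI)
    fix y assume "y \<in> {y. B \<in> snd (\<theta> y)}"
    moreover obtain x where "y = f x" using assms(3) by blast
    ultimately show "y \<in> f ` CX (f -` B)"
      using closure_coalg_hom_snd[OF assms] by auto
  qed (auto simp: closure_coalg_hom_snd[OF assms])
  then show ?thesis
    using closure_space_image[OF assms(1,3)] by simp
qed

end
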